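(* Let $\mathbf{a}=(a_1,\dots,a_n)\in\mathbb{Z}_{\ge0}^n$ with $\mathbf{a}\ne\mathbf{0}$ and $a_1\ge a_2\ge\dots\ge a_n$, let $0<\beta<1$, $\epsilon>0$, and $c_2>0$ with $0<c_2\epsilon<1$. If $1-\beta\ge \dfrac{c_2\epsilon}{n\|\mathbf{a}\|_1}$, then $$\mathrm{Vol}(Q_0\cap Q_1)\le \frac{1}{1+\frac{c_2\epsilon}{2n}}\cdot\frac{2^n}{n!}.$$
   Context: For $\mathbf{c}\in\mathbb{R}^n$, $r\ge 0$, $C(\mathbf{c},r)=\{\mathbf{x}\in\mathbb{R}^n:\|\mathbf{x}-\mathbf{c}\|_1\le r\}$. For $k=0,1,2,\dots$, $Q_k=C((1-\beta^k)\mathbf{a},\beta^k)$; in particular $Q_0=C(\mathbf{0},1)$ and $Q_1=C((1-\beta)\mathbf{a},\beta)$. *)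

theory Defs
  imports "HOL-Analysis.Analysis"
begin

text \<open>Points of R^n are modelled as functions on the index set {..<n}
  (coordinates 0..n-1), i.e. elements of the product space PiE {..<n} UNIV;
  volume is the product Lebesgue measure on it.\<close>

definition l1_ball :: "nat \<Rightarrow> (nat \<Rightarrow> real) \<Rightarrow> real \<Rightarrow> (nat \<Rightarrow> real) set" where
  "l1_ball n c r = {x \<in> PiE {..<n} (\<lambda>_. UNIV). (\<Sum>i<n. \<bar>x i - c i\<bar>) \<le> r}"

definition Qk :: "nat \<Rightarrow> (nat \<Rightarrow> nat) \<Rightarrow> real \<Rightarrow> nat \<Rightarrow> (nat \<Rightarrow> real) set" where
  "Qk n a \<beta> k = l1_ball n (\<lambda>i. (1 - \<beta> ^ k) * real (a i)) (\<beta> ^ k)"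

definition vol :: "nat \<Rightarrow> (nat \<Rightarrow> real) set \<Rightarrow> ennreal" where
  "vol n S = emeasure (PiM {..<n} (\<lambda>_. lborel)) S"

end

theory Submission
  imports Defs
begin

text \<open>
  \<open>Q\<^sub>0 \<inter> Q\<^sub>1\<close> lies in the intersection of the unit l1-balls around 0 and around
  \<open>c = (1 - \<beta>) a\<close>. Slice it perpendicular to the first axis at height y: above the midpoint
  \<open>c\<^sub>1 / 2\<close> the slice lies in an (n-1)-dimensional l1-ball of radius \<open>1 - y\<close>, below it in one of
  radius \<open>y - (c\<^sub>1 - 1)\<close>. Integrating the volume \<open>(2 r)\<^sup>k / k!\<close> of these k-dimensional balls gives
  \<open>2\<^sup>n / n! * (1 - c\<^sub>1 / 2)\<^sup>n\<close>. As \<open>a\<^sub>1\<close> is the largest coordinate,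
  \<open>u = c\<^sub>2 \<epsilon> / (2 n\<^sup>2) \<le> c\<^sub>1 / 2\<close>, and Bernoulli's inequality gives
  \<open>(1 - u)\<^sup>n (1 + n u) \<le> (1 - u\<^sup>2)\<^sup>n \<le> 1\<close>.
\<close>

lemma (in product_sigma_finite) emeasure_PiM_insert_sections:
  assumes "finite I" "i \<notin> I" and S[measurable]: "S \<in> sets (Pi\<^sub>M (insert i I) M)"
  shows "emeasure (Pi\<^sub>M (insert i I) M) S
           = (\<integral>\<^sup>+y. emeasure (Pi\<^sub>M I M) ((\<lambda>x. x(i := y)) -` S \<inter> space (Pi\<^sub>M I M)) \<partial>M i)"
proof -
  have "emeasure (Pi\<^sub>M (insert i I) M) S = (\<integral>\<^sup>+z. indicator S z \<partial>Pi\<^sub>M (insert i I) M)"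
    by simp
  also have "\<dots> = (\<integral>\<^sup>+y. \<integral>\<^sup>+x. indicator S (x(i := y)) \<partial>Pi\<^sub>M I M \<partial>M i)"
    using assms by (intro product_nn_integral_insert_rev) auto
  also have "\<dots> = (\<integral>\<^sup>+y. emeasure (Pi\<^sub>M I M) ((\<lambda>x. x(i := y)) -` S \<inter> space (Pi\<^sub>M I M)) \<partial>M i)"
  proof (intro nn_integral_cong)
    fix y assume y: "y \<in> space (M i)"
    have "(\<lambda>x. x(i := y)) \<in> Pi\<^sub>M I M \<rightarrow>\<^sub>M Pi\<^sub>M (insert i I) M"
      using y by measurable
    then have "(\<lambda>x. x(i := y)) -` S \<inter> space (Pi\<^sub>M I M) \<in> sets (Pi\<^sub>M I M)"
      by measurable
    then have "emeasure (Pi\<^sub>M I M) ((\<lambda>x. x(i := y)) -` S \<inter> space (Pi\<^sub>M I M))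
                 = (\<integral>\<^sup>+x. indicator ((\<lambda>x. x(i := y)) -` S \<inter> space (Pi\<^sub>M I M)) x \<partial>Pi\<^sub>M I M)"
      by simp
    also have "\<dots> = (\<integral>\<^sup>+x. indicator S (x(i := y)) \<partial>Pi\<^sub>M I M)"
      by (intro nn_integral_cong) (simp add: indicator_def)
    finally show "(\<integral>\<^sup>+x. indicator S (x(i := y)) \<partial>Pi\<^sub>M I M)
                 = emeasure (Pi\<^sub>M I M) ((\<lambda>x. x(i := y)) -` S \<inter> space (Pi\<^sub>M I M))" ..
  qed
  finally show ?thesis .
qed

lemma nn_integral_Icc_power_diff_upper:
  fixes a b C :: real
  assumes "a \<le> b" "0 \<le> C"
  shows "(\<integral>\<^sup>+y. ennreal (C * (b - y) ^ k) * indicator {a..b} y \<partial>lborel)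
           = ennreal (C * (b - a) ^ Suc k / Suc k)"
proof -
  have "((\<lambda>y. - (C * (b - y) ^ Suc k / Suc k)) has_real_derivative C * (b - y) ^ k) (at y)" for y
    by (rule derivative_eq_intros refl | simp)+
  then show ?thesis
    using assms by (subst nn_integral_FTC_Icc) auto
qed

lemma nn_integral_Icc_power_diff_lower:
  fixes a b C :: real
  assumes "a \<le> b" "0 \<le> C"
  shows "(\<integral>\<^sup>+y. ennreal (C * (y - a) ^ k) * indicator {a..b} y \<partial>lborel)
           = ennreal (C * (b - a) ^ Suc k / Suc k)"
proof -
  have "((\<lambda>y. C * (y - a) ^ Suc k / Suc k) has_real_derivative C * (y - a) ^ k) (at y)" for y
    by (rule derivative_eq_intros refl | simp)+
  then show ?thesis
    using assms by (subst nn_integral_FTC_Icc) auto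
qed

lemma nn_integral_tent_le:
  fixes f :: "real \<Rightarrow> ennreal" and h d C :: real
  assumes "0 \<le> d" "0 \<le> C"
    and right: "\<And>y. y \<in> {h..h + d} \<Longrightarrow> f y \<le> ennreal (C * (h + d - y) ^ k)"
    and left: "\<And>y. y \<in> {h - d..h} \<Longrightarrow> f y \<le> ennreal (C * (y - (h - d)) ^ k)"
    and outside: "\<And>y. y \<notin> {h - d..h + d} \<Longrightarrow> f y = 0"
  shows "(\<integral>\<^sup>+y. f y \<partial>lborel) \<le> ennreal (2 * C * d ^ Suc k / Suc k)"
proof -
  have "(\<integral>\<^sup>+y. f y \<partial>lborel)
        \<le> (\<integral>\<^sup>+y. ennreal (C * (h + d - y) ^ k) * indicator {h..h + d} y
                 + ennreal (C * (y - (h - d)) ^ k) * indicator {h - d..h} y \<partial>lborel)"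
  proof (intro nn_integral_mono)
    fix y
    consider "y \<in> {h..h + d}" | "y \<in> {h - d..h}" | "y \<notin> {h - d..h + d}"
      by force
    then show "f y \<le> ennreal (C * (h + d - y) ^ k) * indicator {h..h + d} y
                      + ennreal (C * (y - (h - d)) ^ k) * indicator {h - d..h} y"
    proof cases
      case 1
      then show ?thesis by (intro add_increasing2) (auto intro: right)
    next
      case 2
      then show ?thesis by (intro add_increasing) (auto intro: left)
    qed (simp add: outside)
  qed
  also have "\<dots> = ennreal (C * d ^ Suc k / Suc k) + ennreal (C * d ^ Suc k / Suc k)"
    using assms
    by (subst nn_integral_add) (auto simp: nn_integral_Icc_power_diff_upper nn_integral_Icc_power_diff_lower)
  also have "\<dots> = ennreal (2 * C * d ^ Suc k / Suc k)"
    using assms by (subst ennreal_plus[symmetric]) auto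
  finally show ?thesis .
qed

definition l1_cball :: "'i set \<Rightarrow> ('i \<Rightarrow> real) \<Rightarrow> real \<Rightarrow> ('i \<Rightarrow> real) set" where
  "l1_cball I p r = {x \<in> PiE I (\<lambda>_. UNIV). (\<Sum>i\<in>I. \<bar>x i - p i\<bar>) \<le> r}"

lemma l1_ball_eq_l1_cball: "l1_ball n c r = l1_cball {..<n} c r"
  by (simp add: l1_ball_def l1_cball_def)

lemma sets_l1_cball [measurable]:
  assumes "finite I"
  shows "l1_cball I p r \<in> sets (Pi\<^sub>M I (\<lambda>_. lborel))"
proof -
  have "l1_cball I p r = (\<lambda>x. \<Sum>i\<in>I. \<bar>x i - p i\<bar>) -` {..r} \<inter> space (Pi\<^sub>M I (\<lambda>_. lborel))"
    by (auto simp: l1_cball_def space_PiM)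
  also have "\<dots> \<in> sets (Pi\<^sub>M I (\<lambda>_. lborel))"
    using assms by measurable
  finally show ?thesis .
qed

lemma l1_cball_mono: "r \<le> s \<Longrightarrow> l1_cball I p r \<subseteq> l1_cball I p s"
  by (auto simp: l1_cball_def)

lemma l1_cball_empty: "r < 0 \<Longrightarrow> l1_cball I p r = {}"
  by (auto simp: l1_cball_def not_le intro: less_le_trans[OF _ sum_nonneg])

lemma l1_cball_Int_eq_empty:
  assumes "finite I" "j \<in> I" "r + s < \<bar>q j - p j\<bar>"
  shows "l1_cball I p r \<inter> l1_cball I q s = {}"
proof (rule ccontr)
  assume "l1_cball I p r \<inter> l1_cball I q s \<noteq> {}"
  then obtain x where x: "x \<in> l1_cball I p r" "x \<in> l1_cball I q s"
    by blast
  have "\<bar>x j - p j\<bar> \<le> (\<Sum>i\<in>I. \<bar>x i - p i\<bar>)" "\<bar>x j - q j\<bar> \<le> (\<Sum>i\<in>I. \<bar>x i - q i\<bar>)"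
    using assms by (auto intro: member_le_sum)
  then show False
    using x assms(3) by (auto simp: l1_cball_def)
qed

lemma l1_cball_insert_section:
  assumes "finite A" "b \<notin> A"
  shows "(\<lambda>x. x(b := y)) -` l1_cball (insert b A) p t \<inter> space (Pi\<^sub>M A (\<lambda>_. lborel))
           = l1_cball A p (t - \<bar>y - p b\<bar>)"
proof -
  have "(\<Sum>i\<in>insert b A. \<bar>(x(b := y)) i - p i\<bar>) = \<bar>y - p b\<bar> + (\<Sum>i\<in>A. \<bar>x i - p i\<bar>)" for x
    using assms by (simp add: sum.insert) (intro sum.cong, auto)
  then show ?thesis
    using assms by (auto simp: l1_cball_def space_PiM PiE_def extensional_def)
qed

lemma emeasure_l1_cball_le:
  assumes "finite I" "r \<le> s" "0 \<le> s"
  shows "emeasure (Pi\<^sub>M I (\<lambda>_. lborel)) (l1_cball I p r)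
           \<le> ennreal (2 ^ card I / fact (card I) * s ^ card I)"
  using assms
proof (induction I arbitrary: r s rule: finite_induct)
  case empty
  have "l1_cball {} p r \<subseteq> {\<lambda>_. undefined}"
    by (auto simp: l1_cball_def)
  then have "emeasure (count_space {\<lambda>_. undefined}) (l1_cball {} p r) \<le> 1"
    using emeasure_mono[of "l1_cball {} p r" "{\<lambda>_. undefined}" "count_space {\<lambda>_. undefined}"]
    by simp
  then show ?case
    by (simp add: PiM_empty)
next
  case (insert b A)
  interpret product_sigma_finite "\<lambda>_. lborel :: real measure"
    by standard
  define k where "k = card A"
  define C :: real where "C = 2 ^ k / fact k"
  have "emeasure (Pi\<^sub>M (insert b A) (\<lambda>_. lborel)) (l1_cball (insert b A) p r)
          = (\<integral>\<^sup>+y. emeasure (Pi\<^sub>M A (\<lambda>_. lborel)) (l1_cball A p (r - \<bar>y - p b\<bar>)) \<partial>lborel)"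
    using insert.hyps by (simp add: emeasure_PiM_insert_sections l1_cball_insert_section)
  also have "\<dots> \<le> ennreal (2 * C * s ^ Suc k / Suc k)"
  proof (rule nn_integral_tent_le)
    fix y assume "y \<in> {p b..p b + s}"
    then show "emeasure (Pi\<^sub>M A (\<lambda>_. lborel)) (l1_cball A p (r - \<bar>y - p b\<bar>))
                 \<le> ennreal (C * (p b + s - y) ^ k)"
      using insert.IH[of "r - \<bar>y - p b\<bar>" "p b + s - y"] insert.prems by (simp add: C_def k_def)
  next
    fix y assume "y \<in> {p b - s..p b}"
    then show "emeasure (Pi\<^sub>M A (\<lambda>_. lborel)) (l1_cball A p (r - \<bar>y - p b\<bar>))
                 \<le> ennreal (C * (y - (p b - s)) ^ k)"
      using insert.IH[of "r - \<bar>y - p b\<bar>" "y - (p b - s)"] insert.prems by (simp add: C_def k_def)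
  next
    fix y assume "y \<notin> {p b - s..p b + s}"
    then show "emeasure (Pi\<^sub>M A (\<lambda>_. lborel)) (l1_cball A p (r - \<bar>y - p b\<bar>)) = 0"
      using insert.prems by (subst l1_cball_empty) auto
  qed (use insert.prems in \<open>auto simp: C_def\<close>)
  also have "\<dots> = ennreal (2 ^ card (insert b A) / fact (card (insert b A)) * s ^ card (insert b A))"
    using insert.hyps by (simp add: C_def k_def field_simps)
  finally show ?case .
qed

lemma emeasure_l1_cball_Int_le:
  assumes "finite I" "r \<le> t \<or> s \<le> t" "0 \<le> t"
  shows "emeasure (Pi\<^sub>M I (\<lambda>_. lborel)) (l1_cball I p r \<inter> l1_cball I q s)
           \<le> ennreal (2 ^ card I / fact (card I) * t ^ card I)"
  using assms emeasure_l1_cball_le[OF assms(1), of _ t]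
  by (auto intro: order_trans[OF emeasure_mono[OF _ sets_l1_cball]])

lemma emeasure_l1_cball_Int_sections:
  assumes "finite I" "j \<in> I"
  shows "emeasure (Pi\<^sub>M I (\<lambda>_. lborel)) (l1_cball I p r \<inter> l1_cball I q s)
           = (\<integral>\<^sup>+y. emeasure (Pi\<^sub>M (I - {j}) (\<lambda>_. lborel))
                  (l1_cball (I - {j}) p (r - \<bar>y - p j\<bar>) \<inter> l1_cball (I - {j}) q (s - \<bar>y - q j\<bar>)) \<partial>lborel)"
proof -
  interpret product_sigma_finite "\<lambda>_. lborel :: real measure"
    by standard
  have I: "I = insert j (I - {j})"
    using assms(2) by auto
  have "(\<lambda>x. x(j := y)) -` (l1_cball I p r \<inter> l1_cball I q s) \<inter> space (Pi\<^sub>M (I - {j}) (\<lambda>_. lborel))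
          = l1_cball (I - {j}) p (r - \<bar>y - p j\<bar>) \<inter> l1_cball (I - {j}) q (s - \<bar>y - q j\<bar>)" for y
    using l1_cball_insert_section[of "I - {j}" j y p r, folded I]
      l1_cball_insert_section[of "I - {j}" j y q s, folded I] assms(1) by blast
  then show ?thesis
    using emeasure_PiM_insert_sections[of "I - {j}" j "l1_cball I p r \<inter> l1_cball I q s", folded I] assms(1)
    by simp
qed

lemma emeasure_unit_l1_cball_Int_le:
  assumes "finite I" "j \<in> I"
  shows "emeasure (Pi\<^sub>M I (\<lambda>_. lborel)) (l1_cball I p 1 \<inter> l1_cball I q 1)
           \<le> ennreal (2 ^ card I / fact (card I) * max 0 (1 - (q j - p j) / 2) ^ card I)"
proof (cases "q j - p j \<le> 2")
  case False
  then have "l1_cball I p 1 \<inter> l1_cball I q 1 = {}"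
    using assms by (intro l1_cball_Int_eq_empty) auto
  then show ?thesis
    by simp
next
  case True
  define A where "A = I - {j}"
  define k where "k = card A"
  define C :: real where "C = 2 ^ k / fact k"
  define h where "h = (p j + q j) / 2"
  define d where "d = 1 - (q j - p j) / 2"
  let ?M = "Pi\<^sub>M A (\<lambda>_. lborel)"
  have "finite A" "card I = Suc k"
    using assms card_Suc_Diff1[OF assms] by (auto simp: A_def k_def)
  have hd: "h + d = p j + 1" "h - d = q j - 1" "0 \<le> d"
    using True by (auto simp: h_def d_def field_simps)
  have "emeasure (Pi\<^sub>M I (\<lambda>_. lborel)) (l1_cball I p 1 \<inter> l1_cball I q 1)
          = (\<integral>\<^sup>+y. emeasure ?M (l1_cball A p (1 - \<bar>y - p j\<bar>) \<inter> l1_cball A q (1 - \<bar>y - q j\<bar>)) \<partial>lborel)"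
    unfolding A_def using assms by (rule emeasure_l1_cball_Int_sections)
  also have "\<dots> \<le> ennreal (2 * C * d ^ Suc k / Suc k)"
  proof (rule nn_integral_tent_le)
    fix y assume "y \<in> {h..h + d}"
    then have "1 - \<bar>y - p j\<bar> \<le> h + d - y" "0 \<le> h + d - y"
      using hd by auto
    then show "emeasure ?M (l1_cball A p (1 - \<bar>y - p j\<bar>) \<inter> l1_cball A q (1 - \<bar>y - q j\<bar>))
                 \<le> ennreal (C * (h + d - y) ^ k)"
      using emeasure_l1_cball_Int_le[OF \<open>finite A\<close>] by (simp add: C_def k_def)
  next
    fix y assume "y \<in> {h - d..h}"
    then have "1 - \<bar>y - q j\<bar> \<le> y - (h - d)" "0 \<le> y - (h - d)"
      using hd by auto
    then show "emeasure ?M (l1_cball A p (1 - \<bar>y - p j\<bar>) \<inter> l1_cball A q (1 - \<bar>y - q j\<bar>))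
                 \<le> ennreal (C * (y - (h - d)) ^ k)"
      using emeasure_l1_cball_Int_le[OF \<open>finite A\<close>] by (simp add: C_def k_def)
  next
    fix y assume "y \<notin> {h - d..h + d}"
    then have "1 - \<bar>y - p j\<bar> < 0 \<or> 1 - \<bar>y - q j\<bar> < 0"
      using hd by auto
    then show "emeasure ?M (l1_cball A p (1 - \<bar>y - p j\<bar>) \<inter> l1_cball A q (1 - \<bar>y - q j\<bar>)) = 0"
      by (auto simp: l1_cball_empty)
  qed (use hd in \<open>auto simp: C_def\<close>)
  also have "\<dots> = ennreal (2 ^ card I / fact (card I) * max 0 (1 - (q j - p j) / 2) ^ card I)"
    using hd \<open>card I = Suc k\<close> by (simp add: C_def d_def field_simps)
  finally show ?thesis .
qed

lemma max_0_one_minus_power_le_inverse: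
  fixes u v :: real
  assumes "0 \<le> u" "u \<le> v" "u \<le> 1"
  shows "max 0 (1 - v) ^ n \<le> 1 / (1 + n * u)"
proof -
  have "max 0 (1 - v) ^ n * (1 + n * u) \<le> (1 - u) ^ n * (1 + n * u)"
    using assms by (intro mult_right_mono power_mono) auto
  also have "\<dots> \<le> (1 - u) ^ n * (1 + u) ^ n"
    using assms by (intro mult_left_mono Bernoulli_inequality) auto
  also have "\<dots> = (1 - u\<^sup>2) ^ n"
    by (simp add: power_mult_distrib[symmetric] power2_eq_square algebra_simps)
  also have "\<dots> \<le> 1"
    using assms by (intro power_le_one) (auto simp: power2_eq_square mult_le_one)
  moreover have "0 < 1 + n * u"
    using assms by (simp add: add_pos_nonneg)
  ultimately show ?thesis
    by (simp add: pos_le_divide_eq)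
qed

lemma div_square_le_mult_max:
  fixes a :: "nat \<Rightarrow> nat" and x t :: real
  assumes max: "\<And>i. i < n \<Longrightarrow> a i \<le> a 0" and "0 < a 0"
    and le: "x / (real n * real (\<Sum>i<n. a i)) \<le> t" and "0 \<le> x"
  shows "x / (real n)\<^sup>2 \<le> t * real (a 0)"
proof (cases "n = 0")
  case False
  have "(\<Sum>i<n. a i) \<le> n * a 0"
    using sum_mono[of "{..<n}" a "\<lambda>_. a 0"] max by simp
  then have "real (\<Sum>i<n. a i) \<le> real n * real (a 0)"
    by (metis of_nat_le_iff of_nat_mult)
  then have sum_le: "real (\<Sum>i<n. a i) / real n \<le> real (a 0)"
    using False by (simp add: divide_le_eq mult.commute)
  have "0 < (\<Sum>i<n. a i)"
    using False \<open>0 < a 0\<close> by (intro sum_pos2[of _ 0]) auto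
  moreover have "x / (real n)\<^sup>2 = x / (real n * S) * (S / real n)" if "0 < S" for S :: real
    using that by (simp add: power2_eq_square)
  ultimately have "x / (real n)\<^sup>2 = x / (real n * real (\<Sum>i<n. a i)) * (real (\<Sum>i<n. a i) / real n)"
    by (metis of_nat_0_less_iff)
  also have "\<dots> \<le> t * real (a 0)"
  proof (rule mult_mono)
    have "0 \<le> x / (real n * real (\<Sum>i<n. a i))"
      using \<open>0 \<le> x\<close> by (intro divide_nonneg_nonneg mult_nonneg_nonneg) (simp_all add: sum_nonneg)
    then show "0 \<le> t"
      using le by linarith
  qed (use le sum_le in \<open>simp_all del: of_nat_sum\<close>)
  finally show ?thesis .
qed (use le in simp)

lemma vol_Qk_0_Int_Qk_1_le:
  assumes "0 < n" "\<beta> \<le> 1"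
  shows "vol n (Qk n a \<beta> 0 \<inter> Qk n a \<beta> 1)
           \<le> ennreal (2 ^ n / fact n * max 0 (1 - (1 - \<beta>) * real (a 0) / 2) ^ n)"
proof -
  define c where "c = (\<lambda>i. (1 - \<beta>) * real (a i))"
  have "Qk n a \<beta> 0 = l1_cball {..<n} (\<lambda>_. 0) 1"
    by (simp add: Qk_def l1_ball_eq_l1_cball)
  moreover have "Qk n a \<beta> 1 \<subseteq> l1_cball {..<n} c 1"
    using assms(2) by (simp add: Qk_def l1_ball_eq_l1_cball c_def l1_cball_mono)
  ultimately have "vol n (Qk n a \<beta> 0 \<inter> Qk n a \<beta> 1)
                     \<le> emeasure (Pi\<^sub>M {..<n} (\<lambda>_. lborel)) (l1_cball {..<n} (\<lambda>_. 0) 1 \<inter> l1_cball {..<n} c 1)"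
    unfolding vol_def by (intro emeasure_mono sets.Int sets_l1_cball) auto
  also have "\<dots> \<le> ennreal (2 ^ n / fact n * max 0 (1 - (1 - \<beta>) * real (a 0) / 2) ^ n)"
    using emeasure_unit_l1_cball_Int_le[of "{..<n}" 0 "\<lambda>_. 0" c] assms(1) by (simp add: c_def)
  finally show ?thesis .
qed

theorem mainTheorem11:
  fixes n :: nat and a :: "nat \<Rightarrow> nat" and \<beta> \<epsilon> c\<^sub>2 :: real
  assumes "\<exists>i<n. a i \<noteq> 0"
    and "\<And>i j. i \<le> j \<Longrightarrow> j < n \<Longrightarrow> a j \<le> a i"
    and "0 < \<beta>" and "\<beta> < 1" and "0 < \<epsilon>" and "0 < c\<^sub>2"
    and "0 < c\<^sub>2 * \<epsilon>" and "c\<^sub>2 * \<epsilon> < 1"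
    and "1 - \<beta> \<ge> c\<^sub>2 * \<epsilon> / (real n * real (\<Sum>i<n. a i))"
  shows "vol n (Qk n a \<beta> 0 \<inter> Qk n a \<beta> 1)
           \<le> ennreal (1 / (1 + c\<^sub>2 * \<epsilon> / (2 * real n)) * 2 ^ n / fact n)"
proof -
  define u where "u = c\<^sub>2 * \<epsilon> / (2 * (real n)\<^sup>2)"
  obtain i where "i < n" "a i \<noteq> 0"
    using assms(1) by blast
  then have "0 < n" "0 < a 0"
    using assms(2)[of 0 i] by auto
  then have "1 \<le> (real n)\<^sup>2" "real n * u = c\<^sub>2 * \<epsilon> / (2 * real n)"
    by (simp, simp add: u_def power2_eq_square)
  moreover have "u \<le> (1 - \<beta>) * real (a 0) / 2"
    using div_square_le_mult_max[of n a "c\<^sub>2 * \<epsilon>" "1 - \<beta>"] assms(2,7,9) \<open>0 < a 0\<close>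
    by (simp add: u_def)
  ultimately have power_bound:
      "max 0 (1 - (1 - \<beta>) * real (a 0) / 2) ^ n \<le> 1 / (1 + c\<^sub>2 * \<epsilon> / (2 * real n))"
    using max_0_one_minus_power_le_inverse[of u "(1 - \<beta>) * real (a 0) / 2" n] assms(7,8)
    by (simp add: u_def divide_le_eq)
  have "vol n (Qk n a \<beta> 0 \<inter> Qk n a \<beta> 1)
          \<le> ennreal (2 ^ n / fact n * max 0 (1 - (1 - \<beta>) * real (a 0) / 2) ^ n)"
    using vol_Qk_0_Int_Qk_1_le \<open>0 < n\<close> assms(4) by simp
  also have "\<dots> \<le> ennreal (2 ^ n / fact n * (1 / (1 + c\<^sub>2 * \<epsilon> / (2 * real n))))"
    using power_bound by (intro ennreal_leI mult_left_mono) auto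
  also have "\<dots> = ennreal (1 / (1 + c\<^sub>2 * \<epsilon> / (2 * real n)) * 2 ^ n / fact n)"
    by (simp add: mult.commute)
  finally show ?thesis .
qed

end
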